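(* Let $\beta_1>\beta_0>0$, $n\ge2$ and $\varepsilon>0$. Then there exist $C,\alpha>0$ such that for all $t\ge0$ each of the probabilities $\mathbb{P}_{\mathbf 0}(\tilde X^n_t(n)\ge(n\beta_0+\varepsilon)t)$, $\mathbb{P}_{\mathbf 0}\big(\tilde X^n_t(n)\ge(\frac{(n-1)\beta_1+\beta_0}{n}+\varepsilon)t\big)$ and $\mathbb{P}_{\mathbf 0}(\tilde X^n_t(n)\ge(4\sqrt2\sqrt{\beta_1\beta_0}+\varepsilon)t)$ is at most $Ce^{-\alpha t}$. In particular $\tilde d_n(\beta_1)\le\min\big(n\beta_0,\frac{(n-1)\beta_1+\beta_0}{n},4\sqrt2\sqrt{\beta_1\beta_0}\big)$.
   Context: For $m\ge1$: for $x\in\mathbb{N}^m$, with zero boundary convention $x(0)=x(m+1)=0$, let $V_j(x)=\mathbf 1_{\{x(j-1)>x(j)\}}+\mathbf 1_{\{x(j+1)>x(j)\}}\in\{0,1,2\}$. $\tilde X^m$ denotes the continuous-time Markov chain on $\mathbb{N}^m$ jumping from $x$ to $x+e_j$ at rate $\tilde\beta_{V_j(x)}$ where $(\tilde\beta_0,\tilde\beta_1,\tilde\beta_2)=(\beta_0,\beta_1,\beta_1)$, with no other transitions; $\mathbb{P}_{\mathbf 0}$ is its law from the zero configuration. $\tilde d_m(\beta_1)=\inf\{d>0:\ \exists C,\alpha>0,\ \forall t\ge0,\ \mathbb{P}_{\mathbf 0}(\tilde X^m_t(m)\ge dt)\le Ce^{-\alpha t}\}$. *)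

theory Defs
  imports "HOL-Probability.Probability"
begin

text \<open>Configurations x in N^m are functions nat => nat, sites 1..m; the zero boundary
 convention x(0) = x(m+1) = 0 is built into V.\<close>

definition V :: "nat \<Rightarrow> (nat \<Rightarrow> nat) \<Rightarrow> nat \<Rightarrow> nat" where
  "V m x j = (if (if j = 1 then 0 else x (j - 1)) > x j then 1 else 0)
           + (if (if j = m then 0 else x (j + 1)) > x j then 1 else 0)"

text \<open>Jump rate at site j: beta~_{V_j(x)} with (beta~_0, beta~_1, beta~_2) = (beta0, beta1, beta1).\<close>
definition rate :: "real \<Rightarrow> real \<Rightarrow> nat \<Rightarrow> (nat \<Rightarrow> nat) \<Rightarrow> nat \<Rightarrow> real" where
  "rate b0 b1 m x j = (if V m x j = 0 then b0 else b1)"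

definition unif_rate :: "real \<Rightarrow> real \<Rightarrow> nat \<Rightarrow> real" where
  "unif_rate b0 b1 m = real m * max b0 b1"

text \<open>One step of the uniformized jump chain: choose a site j uniformly in {1..m},
  then jump x -> x + e_j with probability rate_j / max b0 b1 (so overall jump
  probability rate_j / Lambda), otherwise stay.\<close>
definition step :: "real \<Rightarrow> real \<Rightarrow> nat \<Rightarrow> (nat \<Rightarrow> nat) \<Rightarrow> (nat \<Rightarrow> nat) pmf" where
  "step b0 b1 m x =
     bind_pmf (pmf_of_set {1..m}) (\<lambda>j.
       bind_pmf (bernoulli_pmf (rate b0 b1 m x j / max b0 b1)) (\<lambda>b.
         return_pmf (if b then x(j := Suc (x j)) else x)))"

definition jump_chain :: "real \<Rightarrow> real \<Rightarrow> nat \<Rightarrow> nat \<Rightarrow> (nat \<Rightarrow> nat) pmf" where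
  "jump_chain b0 b1 m k = ((\<lambda>p. bind_pmf p (step b0 b1 m)) ^^ k) (return_pmf (\<lambda>_. 0))"

text \<open>P_0(X~^m_t \<in> A) for the continuous-time chain, via uniformization
  (Poisson(Lambda t) number of clock rings).\<close>
definition ctmc_prob :: "real \<Rightarrow> real \<Rightarrow> nat \<Rightarrow> real \<Rightarrow> (nat \<Rightarrow> nat) set \<Rightarrow> real" where
  "ctmc_prob b0 b1 m t A =
     (\<Sum>k. exp (- unif_rate b0 b1 m * t) * (unif_rate b0 b1 m * t) ^ k / fact k
           * measure_pmf.prob (jump_chain b0 b1 m k) A)"

definition tail_prob :: "real \<Rightarrow> real \<Rightarrow> nat \<Rightarrow> real \<Rightarrow> real \<Rightarrow> real" where
  "tail_prob b0 b1 m t d = ctmc_prob b0 b1 m t {x. real (x m) \<ge> d * t}"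

definition d_tilde :: "real \<Rightarrow> real \<Rightarrow> nat \<Rightarrow> real" where
  "d_tilde b0 b1 m = Inf {d. d > 0 \<and> (\<exists>C \<alpha>. C > 0 \<and> \<alpha> > 0 \<and>
       (\<forall>t\<ge>0. tail_prob b0 b1 m t d \<le> C * exp (- \<alpha> * t)))}"

end

theory Submission
  imports Defs
begin

text \<open>Uniformization reduces the theorem to a drift condition: if a nonnegative function \<open>F\<close>
  of the configuration satisfies \<open>L F \<le> c F\<close> for the generator \<open>L\<close> of the chain and
  \<open>F x \<ge> exp (\<theta> x(n))\<close>, then \<open>E F(X_t) \<le> F(0) exp (c t)\<close>, and Markov's inequality bounds
  \<open>P(X_t(n) \<ge> d t)\<close> by \<open>F(0) exp ((c - \<theta> d) t)\<close>, which decays as soon as \<open>c < \<theta> d\<close>.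
  Three Lyapunov functions give the three speeds. For \<open>exp (\<theta> max x)\<close> only a maximal site
  can increase \<open>F\<close>, and it jumps at the slow rate \<open>\<beta>0\<close>. For \<open>\<Sum>i. exp (\<theta> x(i))\<close> a maximal
  site again jumps at rate \<open>\<beta>0\<close> and carries at least the average weight. For
  \<open>\<Sum>i. 2^x(i) + v \<Sum>i. |2^x(i) - 2^x(i-1)|\<close> with \<open>\<theta> = ln 2\<close>, a site that jumps at the fast rate
  \<open>\<beta>1\<close> has a higher neighbour, and the gap to that neighbour shrinks by as much as the site
  grows, so the fast jumps are paid for by the gradient term; \<open>v = \<beta>1 / (2 sqrt (\<beta>0 \<beta>1))\<close>
  gives \<open>c = 2 sqrt (\<beta>0 \<beta>1)\<close>.\<close>

definition exponentially_decaying :: "(real \<Rightarrow> real) \<Rightarrow> bool" where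
  "exponentially_decaying f \<longleftrightarrow> (\<exists>C \<alpha>. C > 0 \<and> \<alpha> > 0 \<and> (\<forall>t\<ge>0. f t \<le> C * exp (- \<alpha> * t)))"

lemma exponentially_decaying_max:
  assumes "exponentially_decaying f" and "exponentially_decaying g"
  shows "exponentially_decaying (\<lambda>t. max (f t) (g t))"
proof -
  obtain C1 \<alpha>1 where C1: "C1 > 0" "\<alpha>1 > 0" "\<forall>t\<ge>0. f t \<le> C1 * exp (- \<alpha>1 * t)"
    using assms(1) unfolding exponentially_decaying_def by blast
  obtain C2 \<alpha>2 where C2: "C2 > 0" "\<alpha>2 > 0" "\<forall>t\<ge>0. g t \<le> C2 * exp (- \<alpha>2 * t)"
    using assms(2) unfolding exponentially_decaying_def by blast
  have weaken: "C * exp (- \<alpha> * t) \<le> max C1 C2 * exp (- min \<alpha>1 \<alpha>2 * t)"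
    if "C \<in> {C1, C2}" "\<alpha> \<in> {\<alpha>1, \<alpha>2}" "0 \<le> t" for C \<alpha> t
    using that C1 C2 by (intro mult_mono) (auto intro: mult_right_mono)
  have "max (f t) (g t) \<le> max C1 C2 * exp (- min \<alpha>1 \<alpha>2 * t)" if "0 \<le> t" for t
    using C1(3) C2(3) weaken[of C1 \<alpha>1 t] weaken[of C2 \<alpha>2 t] that by auto
  then show ?thesis
    using C1 C2 unfolding exponentially_decaying_def
    by (intro exI[of _ "max C1 C2"] exI[of _ "min \<alpha>1 \<alpha>2"]) auto
qed

lemma d_tilde_le:
  assumes "0 \<le> d" and "\<And>e. 0 < e \<Longrightarrow> exponentially_decaying (\<lambda>t. tail_prob b0 b1 m t (d + e))"
  shows "d_tilde b0 b1 m \<le> d"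
proof (rule field_le_epsilon)
  fix e :: real
  assume "0 < e"
  then have "d + e \<in> {d. d > 0 \<and> exponentially_decaying (\<lambda>t. tail_prob b0 b1 m t d)}"
    using assms by auto
  then show "d_tilde b0 b1 m \<le> d + e"
    unfolding d_tilde_def exponentially_decaying_def
    by (rule cInf_lower) (auto intro: bdd_belowI[of _ 0])
qed

lemma sum_fun_upd:
  fixes g :: "'b \<Rightarrow> 'c::ab_group_add"
  assumes "finite S" and "j \<in> S"
  shows "(\<Sum>i\<in>S. g ((x(j := v)) i)) = (\<Sum>i\<in>S. g (x i)) + (g v - g (x j))"
proof -
  have "(\<Sum>i\<in>S. g ((x(j := v)) i)) = (\<Sum>i\<in>S. g (x i) + (if i = j then g v - g (x j) else 0))"
    by (intro sum.cong) auto
  then show ?thesis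
    using assms by (simp add: sum.distrib)
qed

lemma Max_fun_upd_Suc_le:
  fixes x :: "'a \<Rightarrow> nat"
  assumes "finite S" and "j \<in> S"
  shows "Max ((x(j := Suc (x j))) ` S) \<le> max (Max (x ` S)) (Suc (x j))"
  using assms by (subst Max_le_iff) (auto simp: le_max_iff_disj)

lemma ex_exp_sub_one_lt:
  fixes c e :: real
  assumes "0 < c" and "0 < e"
  shows "\<exists>\<theta>>0. c * (exp \<theta> - 1) < \<theta> * (c + e)"
proof -
  define \<theta> where "\<theta> = min 1 (e / (2 * c))"
  have \<theta>: "0 < \<theta>" "\<theta> \<le> 1" "\<theta> \<le> e / (2 * c)"
    using assms by (auto simp: \<theta>_def)
  then have "c * \<theta> \<le> e / 2"
    using assms by (simp add: field_simps)
  have "exp \<theta> \<le> 1 + \<theta> + \<theta>\<^sup>2"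
    using exp_bound[of \<theta>] \<theta> by simp
  then have "c * (exp \<theta> - 1) \<le> c * (\<theta> + \<theta>\<^sup>2)"
    using assms by (intro mult_left_mono) auto
  also have "\<dots> = \<theta> * (c + c * \<theta>)"
    by (simp add: power2_eq_square algebra_simps)
  also have "\<dots> < \<theta> * (c + e)"
    using \<theta> \<open>c * \<theta> \<le> e / 2\<close> assms by (intro mult_strict_left_mono) auto
  finally show ?thesis
    using \<theta> by blast
qed

lemma suminf_poisson_le:
  fixes \<Lambda> t B q :: real and p :: "nat \<Rightarrow> real"
  assumes "0 \<le> \<Lambda>" and "0 \<le> t" and p_nonneg: "\<And>k. 0 \<le> p k" and p_le: "\<And>k. p k \<le> B * q ^ k"
  shows "(\<Sum>k. exp (- \<Lambda> * t) * (\<Lambda> * t) ^ k / fact k * p k) \<le> B * exp ((q - 1) * \<Lambda> * t)"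
proof -
  define a where "a k = exp (- \<Lambda> * t) * (\<Lambda> * t) ^ k / fact k * p k" for k
  define g where "g k = B * exp (- \<Lambda> * t) * ((q * \<Lambda> * t) ^ k / fact k)" for k
  have g_sums: "g sums (B * exp (- \<Lambda> * t) * exp (q * \<Lambda> * t))"
    unfolding g_def using exp_converges[of "q * \<Lambda> * t"]
    by (intro sums_mult) (simp add: scaleR_conv_of_real divide_inverse mult.commute)
  have a_le_g: "a k \<le> g k" for k
  proof -
    have "a k \<le> exp (- \<Lambda> * t) * (\<Lambda> * t) ^ k / fact k * (B * q ^ k)"
      unfolding a_def using assms by (intro mult_left_mono p_le) auto
    also have "\<dots> = g k"
      by (simp add: g_def power_mult_distrib field_simps)
    finally show ?thesis .
  qed
  have "summable g"
    using g_sums by (rule sums_summable)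
  moreover have "summable a"
    using \<open>summable g\<close> by (rule summable_comparison_test[rotated])
      (use a_le_g assms in \<open>auto simp: a_def\<close>)
  ultimately have "suminf a \<le> suminf g"
    by (intro suminf_le a_le_g)
  also have "\<dots> = B * exp ((q - 1) * \<Lambda> * t)"
    using g_sums by (simp add: sums_iff mult_exp_exp algebra_simps)
  finally show ?thesis
    unfolding a_def[abs_def] .
qed

lemma exp_mult_of_nat_mono:
  fixes \<theta> :: real
  assumes "0 \<le> \<theta>" and "k \<le> l"
  shows "exp (\<theta> * real k) \<le> exp (\<theta> * real l)"
  using assms by (simp add: mult_left_mono)

definition gap :: "(nat \<Rightarrow> nat) \<Rightarrow> nat \<Rightarrow> real" where
  "gap x i = \<bar>2 ^ x i - 2 ^ x (i - 1)\<bar>"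

definition gap_increment :: "nat \<Rightarrow> nat \<Rightarrow> real" where
  "gap_increment k l = \<bar>2 ^ Suc k - 2 ^ l\<bar> - \<bar>2 ^ k - 2 ^ l\<bar>"

lemma gap_increment_le: "gap_increment k l \<le> 2 ^ k"
  using abs_triangle_ineq[of "2 ^ k - 2 ^ l" "(2::real) ^ k"] by (simp add: gap_increment_def)

lemma two_pow_Suc_le_of_less: "k < l \<Longrightarrow> (2::real) ^ Suc k \<le> 2 ^ l"
  by (rule power_increasing) auto

lemma gap_increment_of_less: "k < l \<Longrightarrow> gap_increment k l = - (2 ^ k)"
  using two_pow_Suc_le_of_less[of k l] by (simp add: gap_increment_def)

lemma two_pow_le_abs_diff_of_less: "k < l \<Longrightarrow> (2::real) ^ k \<le> \<bar>2 ^ k - 2 ^ l\<bar>"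
  using two_pow_Suc_le_of_less[of k l] by simp

locale growth_model =
  fixes b0 b1 :: real and n :: nat
  assumes b0_pos: "0 < b0" and b0_le_b1: "b0 \<le> b1" and n_pos: "1 \<le> n"
begin

definition generator :: "((nat \<Rightarrow> nat) \<Rightarrow> real) \<Rightarrow> (nat \<Rightarrow> nat) \<Rightarrow> real" where
  "generator F x = (\<Sum>j\<in>{1..n}. rate b0 b1 n x j * (F (x(j := Suc (x j))) - F x))"

lemma rate_eq:
  assumes "j \<in> {1..n}"
  shows "rate b0 b1 n x j =
    (if (2 \<le> j \<and> x j < x (j - 1)) \<or> (j < n \<and> x j < x (Suc j)) then b1 else b0)"
  using assms by (auto simp: rate_def V_def)

lemma rate_nonneg: "0 \<le> rate b0 b1 n x j"
  using b0_pos b0_le_b1 by (simp add: rate_def)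

lemma rate_le_b1: "rate b0 b1 n x j \<le> b1"
  using b0_le_b1 by (simp add: rate_def)

lemma rate_at_Max:
  assumes j: "j \<in> {1..n}" and x_j: "x j = Max (x ` {1..n})"
  shows "rate b0 b1 n x j = b0"
proof -
  have le: "x i \<le> x j" if "i \<in> {1..n}" for i
    using that x_j by simp
  have "\<not> x j < x (j - 1)" if "2 \<le> j"
    using that j by (intro leD le) auto
  moreover have "\<not> x j < x (Suc j)" if "j < n"
    using that by (intro leD le) auto
  ultimately show ?thesis
    by (auto simp: rate_eq[OF j])
qed

lemma unif_rate_eq: "unif_rate b0 b1 n = real n * b1"
  using b0_le_b1 by (simp add: unif_rate_def max_def)

lemma unif_rate_pos: "0 < unif_rate b0 b1 n"
  using b0_pos b0_le_b1 n_pos by (simp add: unif_rate_eq)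

lemma nn_integral_step:
  fixes F :: "(nat \<Rightarrow> nat) \<Rightarrow> real"
  assumes F_nonneg: "\<And>y. 0 \<le> F y"
  shows "(\<integral>\<^sup>+y. F y \<partial>step b0 b1 n x) = ennreal (F x + generator F x / unif_rate b0 b1 n)"
proof -
  define p where "p j = rate b0 b1 n x j / b1" for j
  define G where "G j = p j * F (x(j := Suc (x j))) + (1 - p j) * F x" for j
  have p: "0 \<le> p j" "p j \<le> 1" for j
    using rate_nonneg rate_le_b1 b0_pos b0_le_b1 by (auto simp: p_def)
  then have G_nonneg: "0 \<le> G j" for j
    using F_nonneg by (simp add: G_def)
  have bernoulli: "(\<integral>\<^sup>+b. F (if b then x(j := Suc (x j)) else x) \<partial>bernoulli_pmf (p j)) = G j" for j
    using p[of j] F_nonneg[of x] F_nonneg[of "x(j := Suc (x j))"]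
    by (simp add: G_def ennreal_plus ennreal_mult mult.commute)
  have "(\<integral>\<^sup>+y. F y \<partial>step b0 b1 n x) = (\<Sum>j\<in>{1..n}. ennreal (G j)) / ennreal (real n)"
    using b0_le_b1 n_pos by (simp add: step_def max_def p_def[symmetric] bernoulli
        nn_integral_pmf_of_set ennreal_of_nat_eq_real_of_nat)
  also have "\<dots> = ennreal ((\<Sum>j\<in>{1..n}. G j) / real n)"
    using G_nonneg n_pos by (simp add: sum_nonneg divide_ennreal)
  also have "(\<Sum>j\<in>{1..n}. G j) = (\<Sum>j\<in>{1..n}. F x + rate b0 b1 n x j * (F (x(j := Suc (x j))) - F x) / b1)"
    using b0_pos b0_le_b1 by (intro sum.cong) (auto simp: G_def p_def field_simps)
  also have "\<dots> = real n * F x + generator F x / b1"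
    by (simp add: generator_def sum.distrib sum_divide_distrib)
  also have "\<dots> / real n = F x + generator F x / unif_rate b0 b1 n"
    using n_pos by (simp add: unif_rate_eq field_simps)
  finally show ?thesis .
qed

lemma nn_integral_jump_chain_le:
  fixes F :: "(nat \<Rightarrow> nat) \<Rightarrow> real"
  assumes F_nonneg: "\<And>y. 0 \<le> F y" and drift: "\<And>x. generator F x \<le> c * F x" and "0 \<le> c"
  shows "(\<integral>\<^sup>+y. F y \<partial>jump_chain b0 b1 n k) \<le> ennreal (F (\<lambda>_. 0) * (1 + c / unif_rate b0 b1 n) ^ k)"
proof (induction k)
  case 0
  then show ?case by (simp add: jump_chain_def)
next
  case (Suc k)
  define q where "q = 1 + c / unif_rate b0 b1 n"
  have q: "0 \<le> q"
    using \<open>0 \<le> c\<close> unif_rate_pos by (simp add: q_def)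
  have step_le: "(\<integral>\<^sup>+y. F y \<partial>step b0 b1 n x) \<le> ennreal q * ennreal (F x)" for x
  proof -
    have "generator F x / unif_rate b0 b1 n \<le> c * F x / unif_rate b0 b1 n"
      using drift[of x] unif_rate_pos by (simp add: divide_right_mono)
    then have "F x + generator F x / unif_rate b0 b1 n \<le> q * F x"
      by (simp add: q_def distrib_right)
    then show ?thesis
      using q F_nonneg[of x] by (simp add: nn_integral_step[OF F_nonneg] ennreal_leI ennreal_mult[symmetric])
  qed
  have "(\<integral>\<^sup>+y. F y \<partial>jump_chain b0 b1 n (Suc k))
      = (\<integral>\<^sup>+x. (\<integral>\<^sup>+y. F y \<partial>step b0 b1 n x) \<partial>jump_chain b0 b1 n k)"
    by (simp add: jump_chain_def)
  also have "\<dots> \<le> (\<integral>\<^sup>+x. ennreal q * ennreal (F x) \<partial>jump_chain b0 b1 n k)"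
    by (intro nn_integral_mono step_le)
  also have "\<dots> = ennreal q * (\<integral>\<^sup>+x. F x \<partial>jump_chain b0 b1 n k)"
    by (simp add: nn_integral_cmult)
  also have "\<dots> \<le> ennreal q * ennreal (F (\<lambda>_. 0) * q ^ k)"
    using Suc.IH by (intro mult_left_mono) (simp_all add: q_def)
  also have "\<dots> = ennreal (F (\<lambda>_. 0) * q ^ Suc k)"
    using q F_nonneg by (simp add: ennreal_mult[symmetric] mult_ac)
  finally show ?case by (simp add: q_def)
qed

lemma prob_jump_chain_le:
  fixes F :: "(nat \<Rightarrow> nat) \<Rightarrow> real"
  assumes F_nonneg: "\<And>y. 0 \<le> F y" and drift: "\<And>x. generator F x \<le> c * F x" and "0 \<le> c"
    and F_ge: "\<And>x. exp (\<theta> * real (x n)) \<le> F x" and "0 \<le> \<theta>"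
  shows "measure_pmf.prob (jump_chain b0 b1 n k) {x. r \<le> real (x n)}
           \<le> exp (- \<theta> * r) * (F (\<lambda>_. 0) * (1 + c / unif_rate b0 b1 n) ^ k)"
proof -
  let ?A = "{x. r \<le> real (x n)}" and ?E = "exp (- \<theta> * r)"
  have indicator_le: "indicator ?A x \<le> ennreal ?E * ennreal (F x)" for x
  proof (cases "x \<in> ?A")
    case True
    then have "exp (\<theta> * r) \<le> F x"
      using F_ge[of x] \<open>0 \<le> \<theta>\<close> by (smt (verit) mem_Collect_eq exp_le_cancel_iff mult_left_mono)
    then have "1 \<le> ?E * F x"
      by (simp add: exp_minus field_simps)
    then show ?thesis
      using True F_nonneg[of x] by (simp add: ennreal_mult[symmetric] ennreal_leI)
  qed simp
  have "emeasure (measure_pmf (jump_chain b0 b1 n k)) ?A = (\<integral>\<^sup>+x. indicator ?A x \<partial>jump_chain b0 b1 n k)"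
    by simp
  also have "\<dots> \<le> (\<integral>\<^sup>+x. ennreal ?E * ennreal (F x) \<partial>jump_chain b0 b1 n k)"
    by (rule nn_integral_mono) (rule indicator_le)
  also have "\<dots> = ennreal ?E * (\<integral>\<^sup>+x. F x \<partial>jump_chain b0 b1 n k)"
    by (simp add: nn_integral_cmult)
  also have "\<dots> \<le> ennreal ?E * ennreal (F (\<lambda>_. 0) * (1 + c / unif_rate b0 b1 n) ^ k)"
    by (intro mult_left_mono nn_integral_jump_chain_le[OF F_nonneg drift \<open>0 \<le> c\<close>]) simp
  finally show ?thesis
    using unif_rate_pos F_nonneg \<open>0 \<le> c\<close>
    by (simp add: measure_pmf.emeasure_eq_measure ennreal_mult[symmetric] ennreal_le_iff)
qed

lemma tail_prob_le_Lyapunov: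
  fixes F :: "(nat \<Rightarrow> nat) \<Rightarrow> real"
  assumes F_nonneg: "\<And>y. 0 \<le> F y" and drift: "\<And>x. generator F x \<le> c * F x" and "0 \<le> c"
    and F_ge: "\<And>x. exp (\<theta> * real (x n)) \<le> F x" and "0 \<le> \<theta>" and "0 \<le> t"
  shows "tail_prob b0 b1 n t d \<le> F (\<lambda>_. 0) * exp ((c - \<theta> * d) * t)"
proof -
  let ?\<Lambda> = "unif_rate b0 b1 n"
  have "tail_prob b0 b1 n t d \<le> exp (- \<theta> * (d * t)) * F (\<lambda>_. 0) * exp ((1 + c / ?\<Lambda> - 1) * ?\<Lambda> * t)"
    unfolding tail_prob_def ctmc_prob_def using unif_rate_pos \<open>0 \<le> t\<close>
    by (intro suminf_poisson_le)
      (auto simp only: mult.assoc measure_nonneg intro: prob_jump_chain_le[OF F_nonneg drift \<open>0 \<le> c\<close> F_ge \<open>0 \<le> \<theta>\<close>])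
  also have "\<dots> = F (\<lambda>_. 0) * exp ((c - \<theta> * d) * t)"
    using unif_rate_pos by (simp add: mult_exp_exp algebra_simps)
  finally show ?thesis .
qed

lemma exponentially_decaying_tail_prob:
  fixes F :: "(nat \<Rightarrow> nat) \<Rightarrow> real"
  assumes F_nonneg: "\<And>y. 0 \<le> F y" and drift: "\<And>x. generator F x \<le> c * F x" and "0 \<le> c"
    and F_ge: "\<And>x. exp (\<theta> * real (x n)) \<le> F x" and "0 \<le> \<theta>" and "c < \<theta> * d"
  shows "exponentially_decaying (\<lambda>t. tail_prob b0 b1 n t d)"
  unfolding exponentially_decaying_def
proof (intro exI conjI allI impI)
  show "0 < F (\<lambda>_. 0)"
    using F_ge[of "\<lambda>_. 0"] by (simp add: less_le_trans[OF zero_less_one])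
  show "0 < \<theta> * d - c"
    using \<open>c < \<theta> * d\<close> by simp
  show "tail_prob b0 b1 n t d \<le> F (\<lambda>_. 0) * exp (- (\<theta> * d - c) * t)" if "0 \<le> t" for t
    using tail_prob_le_Lyapunov[OF assms(1-5) that] by simp
qed

lemma rate_mult_exp_Max_increment_le:
  fixes \<theta> :: real and x :: "nat \<Rightarrow> nat"
  assumes "0 \<le> \<theta>" and j: "j \<in> {1..n}"
  defines "M \<equiv> Max (x ` {1..n})" and "M' \<equiv> Max ((x(j := Suc (x j))) ` {1..n})"
  shows "rate b0 b1 n x j * (exp (\<theta> * real M') - exp (\<theta> * real M)) \<le> b0 * ((exp \<theta> - 1) * exp (\<theta> * real M))"
proof -
  have M'_le: "M' \<le> max M (Suc (x j))"
    unfolding M'_def M_def using j by (intro Max_fun_upd_Suc_le) auto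
  show ?thesis
  proof (cases "x j = M")
    case True
    have "exp (\<theta> * real M') \<le> exp (\<theta> * real (Suc M))"
      using M'_le True \<open>0 \<le> \<theta>\<close> by (intro exp_mult_of_nat_mono) auto
    also have "\<dots> = exp \<theta> * exp (\<theta> * real M)"
      by (simp add: distrib_left exp_add)
    finally have "exp (\<theta> * real M') - exp (\<theta> * real M) \<le> (exp \<theta> - 1) * exp (\<theta> * real M)"
      by (simp add: algebra_simps)
    moreover have "rate b0 b1 n x j = b0"
      using rate_at_Max[OF j] True by (simp add: M_def)
    ultimately show ?thesis
      using b0_pos by (simp add: mult_left_mono)
  next
    case False
    then have "x j < M"
      using j by (simp add: M_def order.not_eq_order_implies_strict)
    then have "exp (\<theta> * real M') \<le> exp (\<theta> * real M)"
      using M'_le \<open>0 \<le> \<theta>\<close> by (intro exp_mult_of_nat_mono) auto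
    then have "rate b0 b1 n x j * (exp (\<theta> * real M') - exp (\<theta> * real M)) \<le> 0"
      using rate_nonneg by (simp add: mult_nonneg_nonpos)
    also have "0 \<le> b0 * ((exp \<theta> - 1) * exp (\<theta> * real M))"
      using b0_pos \<open>0 \<le> \<theta>\<close> by simp
    finally show ?thesis .
  qed
qed

lemma generator_exp_Max_le:
  fixes \<theta> :: real
  assumes "0 \<le> \<theta>"
  shows "generator (\<lambda>y. exp (\<theta> * real (Max (y ` {1..n})))) x
           \<le> real n * b0 * (exp \<theta> - 1) * exp (\<theta> * real (Max (x ` {1..n})))"
proof -
  have "generator (\<lambda>y. exp (\<theta> * real (Max (y ` {1..n})))) x
      \<le> (\<Sum>j\<in>{1..n}. b0 * ((exp \<theta> - 1) * exp (\<theta> * real (Max (x ` {1..n})))))"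
    unfolding generator_def using assms by (intro sum_mono rate_mult_exp_Max_increment_le)
  then show ?thesis
    by simp
qed

lemma exponentially_decaying_tail_prob_max_speed:
  assumes "0 < e"
  shows "exponentially_decaying (\<lambda>t. tail_prob b0 b1 n t (real n * b0 + e))"
proof -
  obtain \<theta> where \<theta>: "0 < \<theta>" "real n * b0 * (exp \<theta> - 1) < \<theta> * (real n * b0 + e)"
    using ex_exp_sub_one_lt[of "real n * b0" e] b0_pos n_pos assms by auto
  have "exp (\<theta> * real (x n)) \<le> exp (\<theta> * real (Max (x ` {1..n})))" for x
    using \<theta>(1) n_pos by (intro exp_mult_of_nat_mono) auto
  then show ?thesis
    using \<theta> b0_pos generator_exp_Max_le[of \<theta>]
    by (intro exponentially_decaying_tail_prob[where F = "\<lambda>y. exp (\<theta> * real (Max (y ` {1..n})))"]) auto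
qed

lemma sum_rate_mult_mono_le:
  fixes w :: "nat \<Rightarrow> real"
  assumes "mono w" and w_nonneg: "\<And>k. 0 \<le> w k"
  shows "(\<Sum>j\<in>{1..n}. rate b0 b1 n x j * w (x j)) \<le> (b1 - (b1 - b0) / real n) * (\<Sum>j\<in>{1..n}. w (x j))"
proof -
  define W where "W = (\<Sum>j\<in>{1..n}. w (x j))"
  have "Max (x ` {1..n}) \<in> x ` {1..n}"
    using n_pos by (intro Max_in) auto
  then obtain m where m: "m \<in> {1..n}" "x m = Max (x ` {1..n})"
    by (metis imageE)
  have "w (x j) \<le> w (x m)" if "j \<in> {1..n}" for j
    using that m(2) \<open>mono w\<close> by (simp add: monoD)
  then have W_le: "W \<le> real n * w (x m)"
    unfolding W_def using sum_bounded_above[of "{1..n}" "\<lambda>j. w (x j)" "w (x m)"] by simp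
  have "(\<Sum>j\<in>{1..n}. rate b0 b1 n x j * w (x j))
      = b0 * w (x m) + (\<Sum>j\<in>{1..n} - {m}. rate b0 b1 n x j * w (x j))"
    using m by (simp add: sum.remove rate_at_Max)
  also have "(\<Sum>j\<in>{1..n} - {m}. rate b0 b1 n x j * w (x j)) \<le> (\<Sum>j\<in>{1..n} - {m}. b1 * w (x j))"
    using w_nonneg by (intro sum_mono mult_right_mono rate_le_b1)
  also have "\<dots> = b1 * (W - w (x m))"
    using m unfolding W_def by (simp add: sum.remove sum_distrib_left)
  also have "b0 * w (x m) + b1 * (W - w (x m)) = b1 * W - (b1 - b0) * w (x m)"
    by (simp add: algebra_simps)
  also have "\<dots> \<le> b1 * W - (b1 - b0) * (W / real n)"
    using W_le n_pos b0_le_b1 by (intro diff_left_mono mult_left_mono) (auto simp: field_simps)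
  also have "\<dots> = (b1 - (b1 - b0) / real n) * W"
    by (simp add: algebra_simps)
  finally show ?thesis
    unfolding W_def by simp
qed

lemma generator_sum_exp_le:
  fixes \<theta> :: real
  assumes "0 \<le> \<theta>"
  shows "generator (\<lambda>y. \<Sum>i\<in>{1..n}. exp (\<theta> * real (y i))) x
           \<le> (b1 - (b1 - b0) / real n) * (exp \<theta> - 1) * (\<Sum>i\<in>{1..n}. exp (\<theta> * real (x i)))"
proof -
  define F where "F y = (\<Sum>i\<in>{1..n}. exp (\<theta> * real (y i)))" for y :: "nat \<Rightarrow> nat"
  have increment: "F (x(j := Suc (x j))) - F x = (exp \<theta> - 1) * exp (\<theta> * real (x j))"
    if "j \<in> {1..n}" for j
    unfolding F_def sum_fun_upd[OF finite_atLeastAtMost that, where g = "\<lambda>k. exp (\<theta> * real k)"]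
    by (simp add: distrib_left exp_add algebra_simps)
  have "generator F x = (exp \<theta> - 1) * (\<Sum>j\<in>{1..n}. rate b0 b1 n x j * exp (\<theta> * real (x j)))"
    unfolding generator_def sum_distrib_left by (intro sum.cong refl) (simp add: increment)
  also have "\<dots> \<le> (exp \<theta> - 1) * ((b1 - (b1 - b0) / real n) * F x)"
    unfolding F_def using \<open>0 \<le> \<theta>\<close>
    by (intro mult_left_mono sum_rate_mult_mono_le monoI exp_mult_of_nat_mono) auto
  finally show ?thesis
    by (simp add: F_def[abs_def] mult_ac)
qed

lemma exponentially_decaying_tail_prob_average_speed:
  assumes "0 < e"
  shows "exponentially_decaying (\<lambda>t. tail_prob b0 b1 n t ((real (n - 1) * b1 + b0) / real n + e))"
proof -
  define c where "c = b1 - (b1 - b0) / real n"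
  have c_eq: "(real (n - 1) * b1 + b0) / real n = c"
    using n_pos by (simp add: c_def of_nat_diff field_simps)
  have "(b1 - b0) / real n \<le> (b1 - b0) / 1"
    using n_pos b0_le_b1 by (intro divide_left_mono) auto
  then have "0 < c"
    using b0_pos unfolding c_def by simp
  then obtain \<theta> where \<theta>: "0 < \<theta>" "c * (exp \<theta> - 1) < \<theta> * (c + e)"
    using ex_exp_sub_one_lt[of c e] assms by auto
  have "exp (\<theta> * real (x n)) \<le> (\<Sum>i\<in>{1..n}. exp (\<theta> * real (x i)))" for x
    using n_pos by (intro member_le_sum) auto
  moreover have "0 \<le> c * (exp \<theta> - 1)"
    using \<open>0 < c\<close> \<theta>(1) by simp
  ultimately show ?thesis
    using \<theta> generator_sum_exp_le[of \<theta>] unfolding c_eq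
    by (intro exponentially_decaying_tail_prob[where F = "\<lambda>y. \<Sum>i\<in>{1..n}. exp (\<theta> * real (y i))"])
      (auto simp: c_def sum_nonneg mult_ac)
qed

definition pow2_sum :: "(nat \<Rightarrow> nat) \<Rightarrow> real" where
  "pow2_sum x = (\<Sum>i\<in>{1..n}. 2 ^ x i)"

definition pow2_gaps :: "(nat \<Rightarrow> nat) \<Rightarrow> real" where
  "pow2_gaps x = (\<Sum>i\<in>{2..n}. gap x i)"

definition left_charge :: "(nat \<Rightarrow> nat) \<Rightarrow> nat \<Rightarrow> real" where
  "left_charge x j = (if 2 \<le> j \<and> x j < x (j - 1) then gap x j else 0)"

definition right_charge :: "(nat \<Rightarrow> nat) \<Rightarrow> nat \<Rightarrow> real" where
  "right_charge x j = (if j < n \<and> x j < x (Suc j) then gap x (Suc j) else 0)"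

definition gap_change :: "(nat \<Rightarrow> nat) \<Rightarrow> nat \<Rightarrow> real" where
  "gap_change x j = (if 2 \<le> j then gap_increment (x j) (x (j - 1)) else 0)
    + (if j < n then gap_increment (x j) (x (Suc j)) else 0)"

lemma pow2_gaps_fun_upd:
  assumes "j \<in> {1..n}"
  shows "pow2_gaps (x(j := Suc (x j))) = pow2_gaps x + gap_change x j"
proof -
  have "gap (x(j := Suc (x j))) i = gap x i
      + (if i = j then gap_increment (x j) (x (j - 1)) else 0)
      + (if i = Suc j then gap_increment (x j) (x (Suc j)) else 0)" if "2 \<le> i" for i
    using that by (auto simp: gap_def gap_increment_def abs_minus_commute)
  then have "pow2_gaps (x(j := Suc (x j))) = (\<Sum>i\<in>{2..n}. gap x i
      + (if i = j then gap_increment (x j) (x (j - 1)) else 0)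
      + (if i = Suc j then gap_increment (x j) (x (Suc j)) else 0))"
    unfolding pow2_gaps_def by (intro sum.cong) auto
  then show ?thesis
    using assms by (simp add: sum.distrib pow2_gaps_def gap_change_def)
qed

text \<open>Each gap is charged by at most one of its two endpoints, namely the lower one.\<close>
lemma sum_charges_le_pow2_gaps:
  "(\<Sum>j\<in>{1..n}. left_charge x j + right_charge x j) \<le> pow2_gaps x"
proof -
  have left: "(\<Sum>j\<in>{1..n}. left_charge x j) = (\<Sum>i\<in>{2..n}. left_charge x i)"
    by (rule sum.mono_neutral_right) (auto simp: left_charge_def)
  have "(\<Sum>j\<in>{1..n}. right_charge x j) = (\<Sum>j\<in>{1..n - 1}. right_charge x j)"
    by (rule sum.mono_neutral_right) (auto simp: right_charge_def)
  also have "\<dots> = (\<Sum>i\<in>{2..n}. right_charge x (i - 1))"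
    by (rule sum.reindex_bij_witness[where i = "\<lambda>i. i - 1" and j = Suc]) auto
  finally have right: "(\<Sum>j\<in>{1..n}. right_charge x j) = (\<Sum>i\<in>{2..n}. right_charge x (i - 1))" .
  have "(\<Sum>j\<in>{1..n}. left_charge x j + right_charge x j)
      = (\<Sum>i\<in>{2..n}. left_charge x i + right_charge x (i - 1))"
    by (simp only: sum.distrib left right)
  also have "\<dots> \<le> pow2_gaps x"
    unfolding pow2_gaps_def
    by (intro sum_mono) (auto simp: left_charge_def right_charge_def gap_def)
  finally show ?thesis .
qed

lemma gap_change_le: "gap_change x j \<le> 2 * 2 ^ x j"
proof -
  have "(if P then gap_increment (x j) l else 0) \<le> (2::real) ^ x j" for P l
    using gap_increment_le[of "x j" l] by simp
  then show ?thesis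
    unfolding gap_change_def mult_2 by (intro add_mono)
qed

lemma charges_nonneg: "0 \<le> left_charge x j" "0 \<le> right_charge x j"
  by (simp_all add: left_charge_def right_charge_def gap_def)

text \<open>The gap to a higher neighbour shrinks by \<open>2 ^ x j\<close>, the other one grows by at most that much.\<close>
lemma gap_change_of_higher_neighbour:
  assumes "(2 \<le> j \<and> x j < x (j - 1)) \<or> (j < n \<and> x j < x (Suc j))"
  shows "gap_change x j \<le> 0" and "2 ^ x j \<le> left_charge x j + right_charge x j"
proof -
  have "gap_change x j \<le> 0 \<and> 2 ^ x j \<le> left_charge x j + right_charge x j"
    using assms
  proof
    assume left: "2 \<le> j \<and> x j < x (j - 1)"
    then have "2 ^ x j \<le> left_charge x j"
      using two_pow_le_abs_diff_of_less[of "x j" "x (j - 1)"]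
      by (simp add: left_charge_def gap_def abs_minus_commute)
    then show ?thesis
      using left gap_increment_of_less[of "x j" "x (j - 1)"] gap_increment_le[of "x j" "x (Suc j)"]
        charges_nonneg[of x j] by (auto simp: gap_change_def)
  next
    assume right: "j < n \<and> x j < x (Suc j)"
    then have "2 ^ x j \<le> right_charge x j"
      using two_pow_le_abs_diff_of_less[of "x j" "x (Suc j)"] by (simp add: right_charge_def gap_def)
    then show ?thesis
      using right gap_increment_of_less[of "x j" "x (Suc j)"] gap_increment_le[of "x j" "x (j - 1)"]
        charges_nonneg[of x j] by (auto simp: gap_change_def)
  qed
  then show "gap_change x j \<le> 0" and "2 ^ x j \<le> left_charge x j + right_charge x j"
    by auto
qed

lemma rate_mult_pow2_increment_le:
  fixes x :: "nat \<Rightarrow> nat"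
  assumes j: "j \<in> {1..n}" and "0 \<le> v"
  defines "y \<equiv> x(j := Suc (x j))"
  shows "rate b0 b1 n x j * ((pow2_sum y + v * pow2_gaps y) - (pow2_sum x + v * pow2_gaps x))
           \<le> b0 * (1 + 2 * v) * 2 ^ x j + b1 * (left_charge x j + right_charge x j)"
proof -
  define a :: real where "a = 2 ^ x j"
  have "pow2_sum y = pow2_sum x + a"
    unfolding pow2_sum_def y_def sum_fun_upd[OF finite_atLeastAtMost j, where g = "\<lambda>k. (2::real) ^ k"]
    by (simp add: a_def)
  then have increment: "(pow2_sum y + v * pow2_gaps y) - (pow2_sum x + v * pow2_gaps x)
      = a + v * gap_change x j"
    unfolding y_def pow2_gaps_fun_upd[OF j] by (simp add: y_def algebra_simps)
  have charges: "0 \<le> b1 * (left_charge x j + right_charge x j)"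
    using charges_nonneg[of x j] b0_pos b0_le_b1 by simp
  show ?thesis
  proof (cases "(2 \<le> j \<and> x j < x (j - 1)) \<or> (j < n \<and> x j < x (Suc j))")
    case False
    then have rate_b0: "rate b0 b1 n x j = b0"
      by (auto simp: rate_eq[OF j])
    have "v * gap_change x j \<le> v * (2 * a)"
      using gap_change_le \<open>0 \<le> v\<close> by (simp add: a_def mult_left_mono)
    then have "b0 * (a + v * gap_change x j) \<le> b0 * (1 + 2 * v) * a"
      using b0_pos by (simp add: mult_left_mono algebra_simps)
    then show ?thesis
      using charges unfolding increment rate_b0 a_def[symmetric] by linarith
  next
    case True
    then have rate_b1: "rate b0 b1 n x j = b1"
      by (simp add: rate_eq[OF j])
    have "v * gap_change x j \<le> 0"
      using gap_change_of_higher_neighbour(1)[OF True] \<open>0 \<le> v\<close> by (simp add: mult_nonneg_nonpos)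
    then have "a + v * gap_change x j \<le> left_charge x j + right_charge x j"
      using gap_change_of_higher_neighbour(2)[OF True] by (simp add: a_def)
    then have "b1 * (a + v * gap_change x j) \<le> b1 * (left_charge x j + right_charge x j)"
      using b0_pos b0_le_b1 by (intro mult_left_mono) auto
    moreover have "0 \<le> b0 * (1 + 2 * v) * a"
      using b0_pos \<open>0 \<le> v\<close> by (simp add: a_def)
    ultimately show ?thesis
      unfolding increment rate_b1 a_def[symmetric] by linarith
  qed
qed

lemma generator_pow2_potential_le:
  assumes "0 \<le> v"
  shows "generator (\<lambda>y. pow2_sum y + v * pow2_gaps y) x \<le> b0 * (1 + 2 * v) * pow2_sum x + b1 * pow2_gaps x"
proof -
  have "generator (\<lambda>y. pow2_sum y + v * pow2_gaps y) x
      \<le> (\<Sum>j\<in>{1..n}. b0 * (1 + 2 * v) * 2 ^ x j + b1 * (left_charge x j + right_charge x j))"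
    unfolding generator_def using \<open>0 \<le> v\<close> by (intro sum_mono rate_mult_pow2_increment_le) auto
  also have "\<dots> = b0 * (1 + 2 * v) * pow2_sum x + b1 * (\<Sum>j\<in>{1..n}. left_charge x j + right_charge x j)"
    unfolding pow2_sum_def sum_distrib_left by (rule sum.distrib)
  also have "\<dots> \<le> b0 * (1 + 2 * v) * pow2_sum x + b1 * pow2_gaps x"
    using b0_pos b0_le_b1 by (intro add_left_mono mult_left_mono sum_charges_le_pow2_gaps) auto
  finally show ?thesis .
qed

lemma generator_pow2_potential_le_geometric_mean:
  defines "s \<equiv> sqrt (b1 * b0)"
  defines "v \<equiv> b1 / (2 * s)"
  shows "generator (\<lambda>y. pow2_sum y + v * pow2_gaps y) x \<le> 2 * s * (pow2_sum x + v * pow2_gaps x)"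
proof -
  have "0 < s" and s_sq: "s * s = b0 * b1"
    using b0_pos b0_le_b1 by (simp_all add: s_def)
  have "b0 \<le> s"
    unfolding s_def using b0_pos b0_le_b1 by (intro real_le_rsqrt) (simp add: power2_eq_square)
  have "0 \<le> v"
    using b0_pos b0_le_b1 \<open>0 < s\<close> by (simp add: v_def)
  have "b0 * (1 + 2 * v) = b0 + s"
    using \<open>0 < s\<close> s_sq by (simp add: v_def field_simps)
  then have "b0 * (1 + 2 * v) * pow2_sum x \<le> 2 * s * pow2_sum x"
    using \<open>b0 \<le> s\<close> by (intro mult_right_mono) (simp_all add: pow2_sum_def sum_nonneg)
  moreover have "b1 = 2 * s * v"
    using \<open>0 < s\<close> by (simp add: v_def)
  ultimately show ?thesis
    using generator_pow2_potential_le[OF \<open>0 \<le> v\<close>, of x] by (simp add: algebra_simps)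
qed

lemma exponentially_decaying_tail_prob_gradient_speed:
  assumes "0 < e"
  shows "exponentially_decaying (\<lambda>t. tail_prob b0 b1 n t (4 * sqrt 2 * sqrt (b1 * b0) + e))"
proof -
  define s where "s = sqrt (b1 * b0)"
  define v where "v = b1 / (2 * s)"
  have "0 < s" "0 \<le> v"
    using b0_pos b0_le_b1 by (simp_all add: s_def v_def)
  have gaps_nonneg: "0 \<le> pow2_gaps y" for y
    by (simp add: pow2_gaps_def gap_def sum_nonneg)
  have "exp (ln 2 * real (x n)) \<le> pow2_sum x + v * pow2_gaps x" for x
  proof -
    have "exp (ln 2 * real (x n)) = 2 ^ x n"
      by (simp add: exp_of_nat_mult mult.commute)
    also have "\<dots> \<le> pow2_sum x"
      unfolding pow2_sum_def using n_pos by (intro member_le_sum) auto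
    finally show ?thesis
      using mult_nonneg_nonneg[OF \<open>0 \<le> v\<close> gaps_nonneg[of x]] by linarith
  qed
  moreover have "2 * s < ln 2 * (4 * sqrt 2 * sqrt (b1 * b0) + e)"
  proof -
    have "4 * s \<le> 4 * sqrt 2 * sqrt (b1 * b0)"
      using \<open>0 < s\<close> by (simp add: s_def)
    then have "2 / 3 * (4 * s + e) \<le> ln 2 * (4 * sqrt 2 * sqrt (b1 * b0) + e)"
      using ln2_ge_two_thirds \<open>0 < e\<close> \<open>0 < s\<close> by (intro mult_mono) auto
    then show ?thesis
      using \<open>0 < s\<close> \<open>0 < e\<close> by simp
  qed
  ultimately show ?thesis
    using generator_pow2_potential_le_geometric_mean \<open>0 < s\<close> \<open>0 \<le> v\<close> gaps_nonneg
    unfolding s_def[symmetric] v_def[symmetric]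
    by (intro exponentially_decaying_tail_prob[where F = "\<lambda>y. pow2_sum y + v * pow2_gaps y"])
      (auto simp: pow2_sum_def sum_nonneg)
qed

end

theorem mainTheorem9:
  fixes b0 b1 \<epsilon> :: real and n :: nat
  assumes "0 < b0" and "b0 < b1" and "2 \<le> n" and "0 < \<epsilon>"
  shows "(\<exists>C \<alpha>. C > 0 \<and> \<alpha> > 0 \<and> (\<forall>t\<ge>0.
            tail_prob b0 b1 n t (real n * b0 + \<epsilon>) \<le> C * exp (- \<alpha> * t) \<and>
            tail_prob b0 b1 n t ((real (n - 1) * b1 + b0) / real n + \<epsilon>) \<le> C * exp (- \<alpha> * t) \<and>
            tail_prob b0 b1 n t (4 * sqrt 2 * sqrt (b1 * b0) + \<epsilon>) \<le> C * exp (- \<alpha> * t)))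
         \<and> d_tilde b0 b1 n \<le> min (real n * b0)
              (min ((real (n - 1) * b1 + b0) / real n) (4 * sqrt 2 * sqrt (b1 * b0)))"
proof -
  interpret growth_model b0 b1 n
    using assms by unfold_locales auto
  let ?d1 = "real n * b0" and ?d2 = "(real (n - 1) * b1 + b0) / real n"
    and ?d3 = "4 * sqrt 2 * sqrt (b1 * b0)"
  have decays: "exponentially_decaying (\<lambda>t. tail_prob b0 b1 n t (d + e))"
    if "d \<in> {?d1, ?d2, ?d3}" and "0 < e" for d e
    using that exponentially_decaying_tail_prob_max_speed exponentially_decaying_tail_prob_average_speed
      exponentially_decaying_tail_prob_gradient_speed by auto
  have "exponentially_decaying (\<lambda>t. max (tail_prob b0 b1 n t (?d1 + \<epsilon>))
      (max (tail_prob b0 b1 n t (?d2 + \<epsilon>)) (tail_prob b0 b1 n t (?d3 + \<epsilon>))))"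
    using \<open>0 < \<epsilon>\<close> by (intro exponentially_decaying_max decays) auto
  moreover have "d_tilde b0 b1 n \<le> d" if "d \<in> {?d1, ?d2, ?d3}" for d
    using that assms(1,2) by (intro d_tilde_le decays) auto
  ultimately show ?thesis
    unfolding exponentially_decaying_def by auto
qed

end
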